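(* Let $k\ge 3$, constants $c_1\ge\dots\ge c_k>0$ with $\sum c_i=1$, and for $n$ with all $c_in$ integers let $G_n$ be the complete $k$-partite graph with parts $V_1,\dots,V_k$, $|V_i|=c_in$. Let $w_0$ be a uniformly random initial weighting. If $c_i<\tfrac12$, then $$\mathbb{E}(m_i)\le \frac{2c_i}{1-2c_i}.$$
   Context: An initial weighting of a graph on vertex set $V$, $|V|=n$, is a bijection $w_0:V\to\{-n,\dots,-1\}$; here $w_0$ is uniform among all $n!$ such bijections. The quantity $m_i$ is defined by $$m_i=\max\Big\{x\ge 0:\ \exists\, y\ge 0 \text{ with } 2y+x\le n \text{ and } \Big|\bigcup_{j=1}^{2y+x}w_0^{-1}(-j)\cap V_i\Big|=y+x\Big\},$$ equivalently $m_i=\max_{0\le t\le n}X(t)$ where $X(t)=|\{v\in V_i: w_0(v)\ge -t\}|-|\{v\in V\setminus V_i: w_0(v)\ge -t\}|$. A complete $k$-partite graph with parts $V_1,\dots,V_k$ has an edge between $u$ and $v$ iff they lie in different parts. *)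

theory Defs
  imports Complex_Main
begin

text \<open>Initial weightings: bijections from V onto {-n,...,-1}, n = card V
  (fixed to 0 outside V so that the set of weightings is finite, of size n!).\<close>
definition initial_weightings :: "'a set \<Rightarrow> ('a \<Rightarrow> int) set" where
  "initial_weightings V =
     {w. bij_betw w V {- int (card V) .. -1} \<and> (\<forall>v. v \<notin> V \<longrightarrow> w v = 0)}"

definition X_walk :: "'a set \<Rightarrow> 'a set \<Rightarrow> ('a \<Rightarrow> int) \<Rightarrow> nat \<Rightarrow> int" where
  "X_walk V Vi w t =
     int (card {v \<in> Vi. w v \<ge> - int t}) - int (card {v \<in> V - Vi. w v \<ge> - int t})"

definition m_val :: "'a set \<Rightarrow> 'a set \<Rightarrow> ('a \<Rightarrow> int) \<Rightarrow> int" where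
  "m_val V Vi w = Max ((\<lambda>t. X_walk V Vi w t) ` {0..card V})"

definition expected_m :: "'a set \<Rightarrow> 'a set \<Rightarrow> real" where
  "expected_m V Vi =
     (\<Sum>w\<in>initial_weightings V. real_of_int (m_val V Vi w)) / real (card (initial_weightings V))"

end

theory Submission
  imports Defs
begin

text \<open>Reveal the vertices in the order given by \<open>w\<^sub>0\<close>, the vertex of weight \<open>-1\<close> first.
  Then \<open>X\<close> is a walk with \<open>a = |V\<^sub>i|\<close> up-steps and \<open>b = n - a\<close> down-steps in uniformly random
  order. Conditioning on the first vertex shows that the proportion of weightings with
  \<open>m\<^sub>i \<ge> r\<close> satisfies the same first-step recurrence as the ballot-type tail
  \<open>a(a-1)\<cdots>(a-r+1) / ((b+1)\<cdots>(b+r))\<close>, hence equals it; this tail is at most \<open>(a/(b+1))\<^sup>r\<close>.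
  Summing over \<open>r \<ge> 1\<close> bounds \<open>\<bbbE>(m\<^sub>i)\<close> by the geometric series \<open>a/(b+1-a) \<le> 2c\<^sub>i/(1-2c\<^sub>i)\<close>.\<close>

lemma initial_weightings_iff:
  assumes "finite V"
  shows "w \<in> initial_weightings V \<longleftrightarrow>
           inj_on w V \<and> w ` V \<subseteq> {- int (card V)..-1} \<and> (\<forall>u. u \<notin> V \<longrightarrow> w u = 0)"
proof
  assume "inj_on w V \<and> w ` V \<subseteq> {- int (card V)..-1} \<and> (\<forall>u. u \<notin> V \<longrightarrow> w u = 0)"
  moreover from this have "w ` V = {- int (card V)..-1}"
    by (intro card_subset_eq) (auto simp: card_image)
  ultimately show "w \<in> initial_weightings V"
    by (simp add: initial_weightings_def bij_betw_def)
qed (auto simp: initial_weightings_def bij_betw_def)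

lemma initial_weightings_outside:
  "w \<in> initial_weightings V \<Longrightarrow> u \<notin> V \<Longrightarrow> w u = 0"
  by (simp add: initial_weightings_def)

lemma initial_weightings_inj: "w \<in> initial_weightings V \<Longrightarrow> inj_on w V"
  by (simp add: initial_weightings_def bij_betw_def)

lemma initial_weightings_range:
  "w \<in> initial_weightings V \<Longrightarrow> u \<in> V \<Longrightarrow> w u \<in> {- int (card V)..-1}"
  unfolding initial_weightings_def using bij_betwE by blast

lemma finite_initial_weightings:
  assumes "finite V"
  shows "finite (initial_weightings V)"
proof (rule finite_subset)
  show "initial_weightings V \<subseteq>
          {w. \<forall>u. (u \<in> V \<longrightarrow> w u \<in> {- int (card V)..-1}) \<and> (u \<notin> V \<longrightarrow> w u = 0)}"
    by (auto simp: initial_weightings_def bij_betw_def)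
  show "finite \<dots>"
    by (rule finite_set_of_finite_funs[OF assms]) simp
qed

text \<open>The vertex \<open>v\<close> is revealed first; the others keep the order given by \<open>w\<close>.\<close>
definition cons_weighting :: "'a set \<Rightarrow> 'a \<Rightarrow> ('a \<Rightarrow> int) \<Rightarrow> 'a \<Rightarrow> int" where
  "cons_weighting V v w = (\<lambda>u. if u = v then -1 else if u \<in> V then w u - 1 else 0)"

lemma cons_weighting_mem_initial_weightings:
  assumes V: "finite V" and v: "v \<in> V" and w: "w \<in> initial_weightings (V - {v})"
  shows "cons_weighting V v w \<in> initial_weightings V"
proof -
  have card_Vv: "int (card (V - {v})) = int (card V) - 1"
    using card_Suc_Diff1[OF V v] by linarith
  have range: "w u \<in> {- int (card (V - {v}))..-1}" if "u \<in> V" "u \<noteq> v" for u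
    using initial_weightings_range[OF w] that by simp
  have "inj_on (cons_weighting V v w) V"
  proof (rule inj_onI)
    fix x y assume "x \<in> V" "y \<in> V" "cons_weighting V v w x = cons_weighting V v w y"
    then show "x = y"
      using range[of x] range[of y] inj_onD[OF initial_weightings_inj[OF w], of x y]
      by (auto simp: cons_weighting_def split: if_splits)
  qed
  moreover have "cons_weighting V v w ` V \<subseteq> {- int (card V)..-1}"
  proof (rule image_subsetI)
    fix u assume "u \<in> V"
    then show "cons_weighting V v w u \<in> {- int (card V)..-1}"
      using range[of u] card_Vv by (cases "u = v") (auto simp: cons_weighting_def)
  qed
  moreover have "\<forall>u. u \<notin> V \<longrightarrow> cons_weighting V v w u = 0"
    using v by (simp add: cons_weighting_def)
  ultimately show ?thesis
    by (simp add: initial_weightings_iff V)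
qed

lemma tail_mem_initial_weightings:
  assumes V: "finite V" and v: "v \<in> V" and w: "w \<in> initial_weightings V" "w v = -1"
  shows "(\<lambda>u. if u \<in> V - {v} then w u + 1 else 0) \<in> initial_weightings (V - {v})"
    (is "?w \<in> _")
proof -
  have card_Vv: "int (card (V - {v})) = int (card V) - 1"
    using card_Suc_Diff1[OF V v] by linarith
  have "?w ` (V - {v}) \<subseteq> {- int (card (V - {v}))..-1}"
  proof (rule image_subsetI)
    fix u assume u: "u \<in> V - {v}"
    then have "w u \<noteq> w v"
      using v inj_onD[OF initial_weightings_inj[OF w(1)]] by blast
    then show "?w u \<in> {- int (card (V - {v}))..-1}"
      using u w(2) card_Vv initial_weightings_range[OF w(1), of u] by auto
  qed
  moreover have "inj_on ?w (V - {v})"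
    using initial_weightings_inj[OF w(1)] by (auto simp: inj_on_def)
  ultimately show ?thesis
    by (simp add: initial_weightings_iff V)
qed

lemma bij_betw_cons_weighting:
  assumes V: "finite V" and v: "v \<in> V"
  shows "bij_betw (cons_weighting V v) (initial_weightings (V - {v}))
           {w \<in> initial_weightings V. w v = -1}"
proof (rule bij_betw_byWitness)
  define tail where "tail w = (\<lambda>u. if u \<in> V - {v} then w u + 1 else 0)" for w :: "'a \<Rightarrow> int"
  show "\<forall>w\<in>initial_weightings (V - {v}). tail (cons_weighting V v w) = w"
    by (auto simp: tail_def cons_weighting_def initial_weightings_outside fun_eq_iff)
  show "\<forall>w\<in>{w \<in> initial_weightings V. w v = -1}. cons_weighting V v (tail w) = w"
    by (auto simp: tail_def cons_weighting_def initial_weightings_outside fun_eq_iff)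
  show "cons_weighting V v ` initial_weightings (V - {v}) \<subseteq> {w \<in> initial_weightings V. w v = -1}"
    using cons_weighting_mem_initial_weightings[OF V v] by (auto simp: cons_weighting_def)
  show "tail ` {w \<in> initial_weightings V. w v = -1} \<subseteq> initial_weightings (V - {v})"
    using tail_mem_initial_weightings[OF V v] by (auto simp: tail_def)
qed

lemma initial_weightings_obtain_first:
  assumes "finite V" "V \<noteq> {}" "w \<in> initial_weightings V"
  obtains v where "v \<in> V" "w v = -1"
proof -
  have "0 < card V"
    using assms(1,2) card_gt_0_iff by blast
  then have "-1 \<in> w ` V"
    using assms(3) by (simp add: initial_weightings_def bij_betw_def)
  then obtain v where "v \<in> V" "-1 = w v"
    by (rule imageE)
  then show ?thesis
    using that by simp
qed

lemma card_initial_weightings_filter: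
  assumes V: "finite V" "V \<noteq> {}"
  shows "card {w \<in> initial_weightings V. Q w}
           = (\<Sum>v\<in>V. card {w \<in> initial_weightings (V - {v}). Q (cons_weighting V v w)})"
proof -
  let ?S = "\<lambda>v. {w \<in> initial_weightings V. w v = -1 \<and> Q w}"
  have "{w \<in> initial_weightings V. Q w} = (\<Union>v\<in>V. ?S v)"
    using initial_weightings_obtain_first[OF V] by auto
  also have "card \<dots> = (\<Sum>v\<in>V. card (?S v))"
  proof (rule card_UN_disjoint)
    show "\<forall>v\<in>V. finite (?S v)"
      using finite_initial_weightings[OF V(1)] by simp
    show "\<forall>u\<in>V. \<forall>v\<in>V. u \<noteq> v \<longrightarrow> ?S u \<inter> ?S v = {}"
    proof (intro ballI impI equals0I)
      fix u v w assume "u \<in> V" "v \<in> V" "u \<noteq> v" "w \<in> ?S u \<inter> ?S v"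
      then show False
        using inj_onD[OF initial_weightings_inj, of w V u v] by simp
    qed
  qed (rule V(1))
  also have "\<dots> = (\<Sum>v\<in>V. card {w \<in> initial_weightings (V - {v}). Q (cons_weighting V v w)})"
  proof (rule sum.cong)
    fix v assume v: "v \<in> V"
    let ?T = "{w \<in> initial_weightings (V - {v}). Q (cons_weighting V v w)}"
    note bij = bij_betw_cons_weighting[OF V(1) v]
    have "?S v = cons_weighting V v ` ?T"
      using bij_betw_imp_surj_on[OF bij] by auto
    moreover have "inj_on (cons_weighting V v) ?T"
      using bij_betw_imp_inj_on[OF bij] by (rule inj_on_subset) blast
    ultimately show "card (?S v) = card ?T"
      by (simp add: card_image)
  qed (rule refl)
  finally show ?thesis .
qed

lemma card_initial_weightings:
  "finite V \<Longrightarrow> card (initial_weightings V) = fact (card V)"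
proof (induction "card V" arbitrary: V)
  case 0
  then have "initial_weightings V = {\<lambda>_. 0}"
    by (auto simp: initial_weightings_def bij_betw_def)
  then show ?case
    using 0 by simp
next
  case (Suc n)
  have "card (V - {v}) = n" if "v \<in> V" for v
    using Suc.hyps(2) Suc.prems that by simp
  moreover have "V \<noteq> {}"
    using Suc.hyps(2) by auto
  ultimately have "card (initial_weightings V) = (\<Sum>v\<in>V. fact n)"
    using Suc.hyps(1) Suc.prems card_initial_weightings_filter[of V "\<lambda>_. True"] by simp
  also have "\<dots> = fact (card V)"
    using Suc.hyps(2) by (metis fact_Suc of_nat_id sum_constant)
  finally show ?case .
qed

lemma X_walk_0:
  assumes "w \<in> initial_weightings V" "Vi \<subseteq> V"
  shows "X_walk V Vi w 0 = 0"
proof -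
  have "w u < 0" if "u \<in> V" for u
    using initial_weightings_range[OF assms(1) that] by simp
  then have empty: "{u \<in> Vi. w u \<ge> - int 0} = {}" "{u \<in> V - Vi. w u \<ge> - int 0} = {}"
    using assms(2) by fastforce+
  show ?thesis
    unfolding X_walk_def empty by simp
qed

lemma X_walk_cons_weighting_Suc:
  assumes V: "finite V" and v: "v \<in> V" and Vi: "Vi \<subseteq> V"
  shows "X_walk V Vi (cons_weighting V v w) (Suc t)
           = X_walk (V - {v}) (Vi - {v}) w t + (if v \<in> Vi then 1 else -1)"
proof -
  let ?w = "cons_weighting V v w"
  define A where "A = {u \<in> Vi - {v}. w u \<ge> - int t}"
  define B where "B = {u \<in> (V - {v}) - (Vi - {v}). w u \<ge> - int t}"
  have fin: "finite A" "finite B" "v \<notin> A" "v \<notin> B"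
    using V Vi by (auto simp: A_def B_def intro: finite_subset)
  have "?w u \<ge> - int (Suc t) \<longleftrightarrow> u = v \<or> w u \<ge> - int t" if "u \<in> V" for u
    using that by (auto simp: cons_weighting_def)
  then have "{u \<in> Vi. ?w u \<ge> - int (Suc t)} = (if v \<in> Vi then insert v A else A)"
       and "{u \<in> V - Vi. ?w u \<ge> - int (Suc t)} = (if v \<in> Vi then B else insert v B)"
    using v Vi by (auto simp: A_def B_def)
  moreover have "X_walk (V - {v}) (Vi - {v}) w t = int (card A) - int (card B)"
    unfolding X_walk_def A_def B_def ..
  ultimately show ?thesis
    using fin by (simp add: X_walk_def)
qed

lemma m_val_cons_weighting:
  assumes V: "finite V" and v: "v \<in> V" and Vi: "Vi \<subseteq> V"
    and w: "w \<in> initial_weightings (V - {v})"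
  shows "m_val V Vi (cons_weighting V v w)
           = max 0 (m_val (V - {v}) (Vi - {v}) w + (if v \<in> Vi then 1 else -1))"
proof -
  let ?X = "X_walk V Vi (cons_weighting V v w)" and ?X' = "X_walk (V - {v}) (Vi - {v}) w"
  let ?s = "if v \<in> Vi then 1 else -1 :: int"
  have card_V: "card V = Suc (card (V - {v}))"
    using card_Suc_Diff1[OF V v] by simp
  have "cons_weighting V v w \<in> initial_weightings V"
    using V v w by (rule cons_weighting_mem_initial_weightings)
  then have "?X 0 = 0"
    using Vi by (rule X_walk_0)
  then have "?X ` {0..card V} = insert 0 ((\<lambda>t. ?X' t + ?s) ` {0..card (V - {v})})"
    unfolding card_V atLeast0_atMost_Suc_eq_insert_0 image_insert image_image
    using X_walk_cons_weighting_Suc[OF V v Vi] by simp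
  also have "Max \<dots> = max 0 (Max (?X' ` {0..card (V - {v})}) + ?s)"
    by (simp add: Max_add_commute)
  finally show ?thesis
    by (simp add: m_val_def)
qed

lemma m_val_le_card:
  assumes "finite Vi"
  shows "m_val V Vi w \<le> int (card Vi)"
proof -
  have "X_walk V Vi w t \<le> int (card Vi)" for t
    using card_mono[OF assms, of "{v \<in> Vi. w v \<ge> - int t}"] by (simp add: X_walk_def)
  then show ?thesis
    by (simp add: m_val_def)
qed

lemma m_val_nonneg:
  assumes "w \<in> initial_weightings V" "Vi \<subseteq> V"
  shows "0 \<le> m_val V Vi w"
proof -
  have "X_walk V Vi w 0 \<le> m_val V Vi w"
    unfolding m_val_def by (rule Max_ge) auto
  then show ?thesis
    using X_walk_0[OF assms] by simp
qed

definition max_tail :: "nat \<Rightarrow> real \<Rightarrow> real \<Rightarrow> real" where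
  "max_tail r a b = pochhammer (a - of_nat r + 1) r / pochhammer (b + 1) r"

lemma max_tail_0 [simp]: "max_tail 0 a b = 1"
  by (simp add: max_tail_def)

lemma pochhammer_falling_eq_0:
  assumes "a < r"
  shows "pochhammer (real a - real r + 1) r = 0"
proof -
  have "real a - real r + 1 = - real (r - Suc a)"
    using assms by (simp add: of_nat_diff)
  then show ?thesis
    unfolding pochhammer_eq_0_iff using assms by (intro exI[of _ "r - Suc a"]) auto
qed

lemma max_tail_eq_0: "a < r \<Longrightarrow> max_tail r (real a) b = 0"
  by (simp add: max_tail_def pochhammer_falling_eq_0)

lemma max_tail_up_step:
  fixes x y :: real
  assumes "y \<ge> 0"
  shows "x * max_tail r (x - 1) y
           = pochhammer (x - real r) (Suc r) * (y + 1 + real r) / pochhammer (y + 1) (Suc r)"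
proof -
  have "x * max_tail r (x - 1) y = x * pochhammer (x - real r) r / pochhammer (y + 1) r"
    by (simp add: max_tail_def algebra_simps)
  also have "x * pochhammer (x - real r) r = pochhammer (x - real r) (Suc r)"
    by (simp add: pochhammer_Suc)
  also have "pochhammer (y + 1) r = pochhammer (y + 1) (Suc r) / (y + 1 + real r)"
    using assms by (simp add: pochhammer_Suc)
  finally show ?thesis
    by simp
qed

lemma max_tail_down_step:
  fixes x y :: real
  assumes "y \<noteq> 0"
  shows "y * max_tail (Suc (Suc r)) x (y - 1)
           = pochhammer (x - real r) (Suc r) * (x - 1 - real r) / pochhammer (y + 1) (Suc r)"
proof -
  have "pochhammer (x - 1 - real r) (Suc (Suc r))
          = (x - 1 - real r) * pochhammer (x - 1 - real r + 1) (Suc r)"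
    by (rule pochhammer_rec)
  moreover have "pochhammer y (Suc (Suc r)) = y * pochhammer (y + 1) (Suc r)"
    by (rule pochhammer_rec)
  moreover have "max_tail (Suc (Suc r)) x (y - 1)
                   = pochhammer (x - 1 - real r) (Suc (Suc r)) / pochhammer y (Suc (Suc r))"
    by (simp add: max_tail_def algebra_simps)
  ultimately show ?thesis
    using assms by (simp add: mult.commute)
qed

lemma max_tail_recurrence:
  assumes "a \<le> Suc r + b"
  shows "real a * max_tail r (real (a - 1)) (real b)
           + real b * max_tail (Suc (Suc r)) (real a) (real (b - 1))
         = (real a + real b) * max_tail (Suc r) (real a) (real b)"
proof -
  define x y where "x = real a" and "y = real b"
  define N D where "N = pochhammer (x - real r) (Suc r)" and "D = pochhammer (y + 1) (Suc r)"
  have "D > 0"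
    by (simp add: D_def y_def pochhammer_pos add_pos_nonneg)
  have up: "x * max_tail r (x - 1) y = N * (y + 1 + real r) / D"
    using max_tail_up_step[of y x r] by (simp add: N_def D_def y_def)
  have down: "y * max_tail (Suc (Suc r)) x (y - 1) = N * (x - 1 - real r) / D"
  proof (cases "b = 0")
    case True
    have "N = 0 \<or> x - 1 - real r = 0"
      using assms True pochhammer_falling_eq_0[of a "Suc r"] by (cases "a = Suc r") (auto simp: N_def x_def)
    then show ?thesis
      using True by (auto simp: y_def)
  next
    case False
    then show ?thesis
      using max_tail_down_step[of y r x] by (simp add: N_def D_def y_def)
  qed
  have "real a * max_tail r (real (a - 1)) (real b) = x * max_tail r (x - 1) y"
    by (cases a) (simp_all add: x_def y_def)
  moreover have "real b * max_tail (Suc (Suc r)) (real a) (real (b - 1))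
                   = y * max_tail (Suc (Suc r)) x (y - 1)"
    by (cases b) (simp_all add: x_def y_def)
  moreover have "x * max_tail r (x - 1) y + y * max_tail (Suc (Suc r)) x (y - 1) = N * (x + y) / D"
    unfolding up down using \<open>D > 0\<close> by (simp add: field_simps)
  moreover have "N * (x + y) / D = (x + y) * max_tail (Suc r) x y"
    by (simp add: max_tail_def N_def D_def)
  ultimately show ?thesis
    by (simp only: x_def y_def)
qed

lemma max_tail_le_power:
  "max_tail r (real a) (real b) \<le> (real a / (real b + 1)) ^ r"
proof (cases "a < r")
  case True
  then show ?thesis
    by (simp add: max_tail_eq_0)
next
  case False
  have "max_tail r (real a) (real b)
          = (\<Prod>i<r. (real a - real r + 1 + real i) / (real b + 1 + real i))"
    by (simp add: max_tail_def pochhammer_prod atLeast0LessThan prod_dividef)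
  also have "\<dots> \<le> (\<Prod>i<r. real a / (real b + 1))"
  proof (rule prod_mono)
    fix i assume "i \<in> {..<r}"
    with False show "0 \<le> (real a - real r + 1 + real i) / (real b + 1 + real i) \<and>
        (real a - real r + 1 + real i) / (real b + 1 + real i) \<le> real a / (real b + 1)"
      by (auto intro!: frac_le)
  qed
  finally show ?thesis
    by simp
qed

lemma card_m_val_ge_0:
  assumes "finite V" "Vi \<subseteq> V"
  shows "card {w \<in> initial_weightings V. 0 \<le> m_val V Vi w} = fact (card V)"
proof -
  have "{w \<in> initial_weightings V. 0 \<le> m_val V Vi w} = initial_weightings V"
    using m_val_nonneg[OF _ assms(2)] by blast
  then show ?thesis
    using card_initial_weightings[OF assms(1)] by simp
qed

lemma card_m_val_ge_Suc:
  assumes V: "finite V" "V \<noteq> {}" and Vi: "Vi \<subseteq> V"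
  shows "card {w \<in> initial_weightings V. int (Suc k) \<le> m_val V Vi w}
           = (\<Sum>v\<in>Vi. card {w \<in> initial_weightings (V - {v}). int k \<le> m_val (V - {v}) (Vi - {v}) w})
             + (\<Sum>v\<in>V - Vi. card {w \<in> initial_weightings (V - {v}).
                                    int (Suc (Suc k)) \<le> m_val (V - {v}) Vi w})"
    (is "_ = ?rhs")
proof -
  have "{w \<in> initial_weightings (V - {v}). int (Suc k) \<le> m_val V Vi (cons_weighting V v w)}
          = (if v \<in> Vi
             then {w \<in> initial_weightings (V - {v}). int k \<le> m_val (V - {v}) (Vi - {v}) w}
             else {w \<in> initial_weightings (V - {v}). int (Suc (Suc k)) \<le> m_val (V - {v}) Vi w})"
    if "v \<in> V" for v
    using m_val_cons_weighting[OF V(1) that Vi] by auto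
  then have "card {w \<in> initial_weightings V. int (Suc k) \<le> m_val V Vi w}
      = (\<Sum>v\<in>V. if v \<in> Vi
             then card {w \<in> initial_weightings (V - {v}). int k \<le> m_val (V - {v}) (Vi - {v}) w}
             else card {w \<in> initial_weightings (V - {v}). int (Suc (Suc k)) \<le> m_val (V - {v}) Vi w})"
    unfolding card_initial_weightings_filter[OF V] by (intro sum.cong) auto
  also have "\<dots> = ?rhs"
    using Vi by (simp add: sum.If_cases[OF V(1)] Int_absorb1 Diff_eq)
  finally show ?thesis .
qed

lemma card_m_val_ge_step:
  assumes V: "finite V" "V \<noteq> {}" and Vi: "Vi \<subseteq> V" and cond: "card Vi \<le> Suc k + card (V - Vi)"
    and IH: "\<And>v Vi' r. v \<in> V \<Longrightarrow> Vi' \<subseteq> V - {v} \<Longrightarrow> card Vi' \<le> r + card (V - {v} - Vi') \<Longrightarrow>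
               real (card {w \<in> initial_weightings (V - {v}). int r \<le> m_val (V - {v}) Vi' w})
                 = fact (card V - 1) * max_tail r (real (card Vi')) (real (card (V - {v} - Vi')))"
  shows "real (card {w \<in> initial_weightings V. int (Suc k) \<le> m_val V Vi w})
           = fact (card V) * max_tail (Suc k) (real (card Vi)) (real (card (V - Vi)))"
proof -
  define a b where "a = card Vi" and "b = card (V - Vi)"
  have up: "real (card {w \<in> initial_weightings (V - {v}). int k \<le> m_val (V - {v}) (Vi - {v}) w})
              = fact (card V - 1) * max_tail k (real (a - 1)) (real b)" if v: "v \<in> Vi" for v
  proof -
    have rest: "V - {v} - (Vi - {v}) = V - Vi" and card_Viv: "card (Vi - {v}) = a - 1"
      using v Vi finite_subset[OF Vi V(1)] by (auto simp: a_def)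
    have "v \<in> V" "Vi - {v} \<subseteq> V - {v}" "card (Vi - {v}) \<le> k + card (V - {v} - (Vi - {v}))"
      using v Vi cond rest card_Viv by (auto simp: a_def b_def)
    from IH[OF this] show ?thesis
      unfolding rest card_Viv by (simp add: b_def)
  qed
  have down: "real (card {w \<in> initial_weightings (V - {v}). int (Suc (Suc k)) \<le> m_val (V - {v}) Vi w})
                = fact (card V - 1) * max_tail (Suc (Suc k)) (real a) (real (b - 1))"
    if v: "v \<in> V - Vi" for v
  proof -
    have rest: "V - {v} - Vi = (V - Vi) - {v}" and card_rest: "card ((V - Vi) - {v}) = b - 1"
      using v V(1) by (auto simp: b_def)
    have "v \<in> V" "Vi \<subseteq> V - {v}" "card Vi \<le> Suc (Suc k) + card (V - {v} - Vi)"
      using v Vi cond rest card_rest by (auto simp: a_def b_def)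
    from IH[OF this] show ?thesis
      unfolding rest card_rest by (simp add: a_def)
  qed
  have "real (card {w \<in> initial_weightings V. int (Suc k) \<le> m_val V Vi w})
          = (\<Sum>v\<in>Vi. fact (card V - 1) * max_tail k (real (a - 1)) (real b))
            + (\<Sum>v\<in>V - Vi. fact (card V - 1) * max_tail (Suc (Suc k)) (real a) (real (b - 1)))"
    unfolding card_m_val_ge_Suc[OF V Vi] of_nat_add of_nat_sum
    by (intro arg_cong2[where f = "(+)"] sum.cong refl up down)
  also have "\<dots> = fact (card V - 1) * (real a * max_tail k (real (a - 1)) (real b)
                      + real b * max_tail (Suc (Suc k)) (real a) (real (b - 1)))"
    by (simp add: a_def b_def algebra_simps)
  also have "\<dots> = fact (card V) * max_tail (Suc k) (real a) (real b)"
  proof -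
    have "a + b = card V"
      using card_Diff_subset[OF finite_subset[OF Vi V(1)] Vi] card_mono[OF V(1) Vi]
      by (simp add: a_def b_def)
    moreover have "card V = Suc (card V - 1)"
      using V by (simp add: card_gt_0_iff)
    ultimately have "fact (card V) = (real a + real b) * (fact (card V - 1) :: real)"
      by (metis fact_Suc of_nat_add)
    then show ?thesis
      using max_tail_recurrence[of a k b] cond by (simp add: a_def b_def)
  qed
  finally show ?thesis
    by (simp add: a_def b_def)
qed

lemma card_m_val_ge:
  assumes "finite V" "Vi \<subseteq> V" "card Vi \<le> r + card (V - Vi)"
  shows "real (card {w \<in> initial_weightings V. int r \<le> m_val V Vi w})
           = fact (card V) * max_tail r (real (card Vi)) (real (card (V - Vi)))"
  using assms
proof (induction "card V" arbitrary: V Vi r rule: less_induct)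
  case less
  note V = less.prems(1) and Vi = less.prems(2)
  consider "r = 0" | "V = {}" "r \<noteq> 0" | k where "r = Suc k" "V \<noteq> {}"
    by (cases r) auto
  then show ?case
  proof cases
    case 1
    then show ?thesis
      using card_m_val_ge_0[OF V Vi] by simp
  next
    case 2
    then have "\<not> int r \<le> m_val V Vi w" for w
      using m_val_le_card[of Vi V w] Vi by simp
    then show ?thesis
      using max_tail_eq_0[of 0 r] 2 Vi by simp
  next
    case 3
    have "card (V - {v}) < card V" "card (V - {v}) = card V - 1" if "v \<in> V" for v
      using card_Diff1_less[OF V that] that by simp_all
    then show ?thesis
      unfolding \<open>r = Suc k\<close>
      by (intro card_m_val_ge_step[OF V \<open>V \<noteq> {}\<close> Vi]) (use less 3 in auto)
  qed
qed

lemma of_int_le_sum_of_bool_le: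
  fixes m :: int
  assumes "m \<le> int n"
  shows "real_of_int m \<le> (\<Sum>r=1..n. of_bool (int r \<le> m))"
proof (cases "m \<le> 0")
  case False
  then have "{1..n} \<inter> {r. int r \<le> m} = {1..nat m}"
    using assms by auto
  then show ?thesis
    using False by simp
qed (simp add: sum_nonneg)

lemma expected_m_le_sum_max_tail:
  assumes V: "finite V" and Vi: "Vi \<subseteq> V" and "card Vi \<le> Suc (card (V - Vi))"
  shows "expected_m V Vi \<le> (\<Sum>r=1..card V. max_tail r (real (card Vi)) (real (card (V - Vi))))"
proof -
  let ?I = "initial_weightings V" and ?T = "\<lambda>r. max_tail r (real (card Vi)) (real (card (V - Vi)))"
  have "m_val V Vi w \<le> int (card V)" for w
    using m_val_le_card[of Vi V w] card_mono[OF V Vi] finite_subset[OF Vi V] by simp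
  then have "(\<Sum>w\<in>?I. real_of_int (m_val V Vi w))
               \<le> (\<Sum>w\<in>?I. \<Sum>r=1..card V. of_bool (int r \<le> m_val V Vi w))"
    by (intro sum_mono of_int_le_sum_of_bool_le)
  also have "\<dots> = (\<Sum>r=1..card V. real (card {w \<in> ?I. int r \<le> m_val V Vi w}))"
    using finite_initial_weightings[OF V] by (subst sum.swap) (simp add: Int_def)
  also have "\<dots> = fact (card V) * (\<Sum>r=1..card V. ?T r)"
    using assms by (simp add: card_m_val_ge sum_distrib_left)
  finally show ?thesis
    by (simp add: expected_m_def card_initial_weightings[OF V] field_simps)
qed

lemma sum_max_tail_le:
  assumes "a \<le> b"
  shows "(\<Sum>r=1..n. max_tail r (real a) (real b)) \<le> real a / (real b + 1 - real a)"
proof -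
  define q where "q = real a / (real b + 1)"
  have q: "0 \<le> q" "q < 1"
    using assms by (simp_all add: q_def)
  have "(\<Sum>r=1..n. max_tail r (real a) (real b)) \<le> (\<Sum>r=1..n. q ^ r)"
    unfolding q_def by (intro sum_mono max_tail_le_power)
  also have "\<dots> \<le> q / (1 - q)"
    using q by (auto simp: sum_gp divide_right_mono)
  also have "\<dots> = real a / (real b + 1 - real a)"
  proof -
    have "real b + 1 > 0" "real b + 1 - real a > 0"
      using assms by simp_all
    moreover from this have "1 - q = (real b + 1 - real a) / (real b + 1)"
      by (simp add: q_def field_simps)
    ultimately show ?thesis
      by (simp add: q_def)
  qed
  finally show ?thesis .
qed

theorem lemma2:
  fixes k n i :: nat and c :: "nat \<Rightarrow> real" and V :: "'a set"
    and P :: "nat \<Rightarrow> 'a set" and E :: "'a \<Rightarrow> 'a \<Rightarrow> bool"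
  assumes k3: "k \<ge> 3"
    and c_mono: "\<forall>j\<in>{1..<k}. c (Suc j) \<le> c j"
    and c_pos: "\<forall>j\<in>{1..k}. c j > 0"
    and c_sum: "(\<Sum>j=1..k. c j) = 1"
    and c_int: "\<forall>j\<in>{1..k}. c j * real n \<in> \<int>"
    and V_fin: "finite V" and V_card: "card V = n"
    and P_sub: "\<forall>j\<in>{1..k}. P j \<subseteq> V"
    and P_disj: "\<forall>j\<in>{1..k}. \<forall>l\<in>{1..k}. j \<noteq> l \<longrightarrow> P j \<inter> P l = {}"
    and P_cover: "(\<Union>j\<in>{1..k}. P j) = V"
    and P_card: "\<forall>j\<in>{1..k}. real (card (P j)) = c j * real n"
    and E_def: "\<forall>u v. E u v \<longleftrightarrow>
                  (\<exists>j\<in>{1..k}. \<exists>l\<in>{1..k}. j \<noteq> l \<and> u \<in> P j \<and> v \<in> P l)"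
    and i_range: "i \<in> {1..k}"
    and ci_half: "c i < 1/2"
  shows "expected_m V (P i) \<le> 2 * c i / (1 - 2 * c i)"
proof -
  \<comment> \<open>Only \<open>|P i| = c i * n\<close> and \<open>c i < 1/2\<close> matter; the other hypotheses describe the graph.\<close>
  define a b where "a = card (P i)" and "b = card (V - P i)"
  have sub: "P i \<subseteq> V"
    using P_sub i_range by blast
  have ci_pos: "c i > 0"
    using c_pos i_range by blast
  have a: "real a = c i * real n"
    using P_card i_range by (simp add: a_def)
  have b: "real b = real n - real a"
    using card_Diff_subset[OF finite_subset[OF sub V_fin] sub] card_mono[OF V_fin sub] V_card
    by (simp add: a_def b_def of_nat_diff)
  have "c i * real n \<le> real n / 2"
    using mult_right_mono[of "c i" "1/2" "real n"] ci_half by simp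
  then have "a \<le> b"
    using a b by simp
  then have "expected_m V (P i) \<le> real a / (real b + 1 - real a)"
    using expected_m_le_sum_max_tail[OF V_fin sub] sum_max_tail_le[of a b "card V"]
    by (simp add: a_def b_def)
  also have "\<dots> \<le> 2 * c i / (1 - 2 * c i)"
  proof (cases "n = 0")
    case True
    then show ?thesis
      using a ci_pos ci_half by simp
  next
    case False
    then have diff: "real b - real a = real n * (1 - 2 * c i)" "real n * (1 - 2 * c i) > 0"
      using a b ci_half by (simp_all add: algebra_simps)
    then have "real a / (real b + 1 - real a) \<le> real a / (real b - real a)"
      by (intro divide_left_mono) (simp_all add: mult_pos_pos)
    also have "\<dots> = c i / (1 - 2 * c i)"
      using diff False by (simp add: a)
    also have "\<dots> \<le> 2 * c i / (1 - 2 * c i)"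
      using ci_pos ci_half by (simp add: divide_right_mono)
    finally show ?thesis .
  qed
  finally show ?thesis .
qed

end
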